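(* For $s,s'\in\mathbb C$ define $d_{s,s'}\colon G/M\to\mathbb C$ by $d_{s,s'}(gM)=q^{(\frac12+is)H(g)}q^{(\frac12+is')H(gr)}$. Then for all $g,g'\in G$ and $n\in\mathbb Z$: (i) $d_{s,s'}(g'gM)=q^{(\frac12+is)\langle g'o,g'g\omega_+\rangle}q^{(\frac12+is')\langle g'o,g'g\omega_-\rangle}d_{s,s'}(gM)$; (ii) $d_{s,s'}(g\tau^nM)=q^{n(\frac12+is)}q^{-n(\frac12+is')}d_{s,s'}(gM)$.
   Context: Let $q\ge2$ and $\mathfrak G$ the $(q+1)$-regular tree with vertex set $\mathfrak X$, graph distance $d$ and boundary $\Omega$ (infinite non-backtracking edge chains modulo eventual equality up to shift); $[x,\omega)$ is the ray from $x$ to $\omega$. Fix a vertex $o$ and $\omega_-\neq\omega_+\in\Omega$ with $o$ on the geodesic $]\omega_-,\omega_+[$. $\langle x,\omega\rangle=d(o,y)-d(x,y)$ where $[o,\omega)\cap[x,\omega)=[y,\omega)$. $G=\mathrm{Aut}(\mathfrak G)$, $K=\mathrm{Stab}_G(o)$, $B_{\omega_+}=\{g\in G:g\omega_+=\omega_+,\ g\text{ fixes some vertex}\}$, $\tau\in G$ a fixed automorphism fixing $\omega_\pm$ and translating $]\omega_-,\omega_+[$ one step towards $\omega_+$; each $g\in G$ is $g=kn\tau^j$ with $k\in K,n\in B_{\omega_+}$ and unique $j=:H(g)\in\mathbb Z$. $r\in K$ is fixed with $r^2=\mathrm{id}$, $r\tau^jr^{-1}=\tau^{-j}$. $M=\{\gamma\in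 K:\gamma$ fixes every vertex of $]\omega_-,\omega_+[\}$; $H(g)$ and $H(gr)$ depend only on $gM$. *)

theory Defs
  imports "HOL-Analysis.Analysis"
begin

definition walk :: "('v \<Rightarrow> 'v \<Rightarrow> bool) \<Rightarrow> (nat \<Rightarrow> 'v) \<Rightarrow> nat \<Rightarrow> bool" where
  "walk adj f n \<longleftrightarrow> (\<forall>i<n. adj (f i) (f (Suc i)))"

definition nb_walk :: "('v \<Rightarrow> 'v \<Rightarrow> bool) \<Rightarrow> (nat \<Rightarrow> 'v) \<Rightarrow> nat \<Rightarrow> bool" where
  "nb_walk adj f n \<longleftrightarrow> walk adj f n \<and> (\<forall>i. i + 2 \<le> n \<longrightarrow> f i \<noteq> f (i + 2))"

definition is_tree :: "('v \<Rightarrow> 'v \<Rightarrow> bool) \<Rightarrow> bool" where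
  "is_tree adj \<longleftrightarrow> (\<forall>x y. adj x y \<longrightarrow> adj y x) \<and> (\<forall>x. \<not> adj x x)
     \<and> (\<forall>x y. \<exists>f n. walk adj f n \<and> f 0 = x \<and> f n = y)
     \<and> (\<forall>f n. n > 0 \<and> nb_walk adj f n \<longrightarrow> f 0 \<noteq> f n)"

definition regular :: "('v \<Rightarrow> 'v \<Rightarrow> bool) \<Rightarrow> nat \<Rightarrow> bool" where
  "regular adj k \<longleftrightarrow> (\<forall>x. finite {y. adj x y} \<and> card {y. adj x y} = k)"

definition gdist :: "('v \<Rightarrow> 'v \<Rightarrow> bool) \<Rightarrow> 'v \<Rightarrow> 'v \<Rightarrow> nat" where
  "gdist adj x y = (LEAST n. \<exists>f. walk adj f n \<and> f 0 = x \<and> f n = y)"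

definition is_ray :: "('v \<Rightarrow> 'v \<Rightarrow> bool) \<Rightarrow> (nat \<Rightarrow> 'v) \<Rightarrow> bool" where
  "is_ray adj f \<longleftrightarrow> (\<forall>i. adj (f i) (f (Suc i)) \<and> f i \<noteq> f (i + 2))"

definition ray_equiv :: "(nat \<Rightarrow> 'v) \<Rightarrow> (nat \<Rightarrow> 'v) \<Rightarrow> bool" where
  "ray_equiv f f' \<longleftrightarrow> (\<exists>k m. \<forall>i. f (i + k) = f' (i + m))"

definition boundary :: "('v \<Rightarrow> 'v \<Rightarrow> bool) \<Rightarrow> (nat \<Rightarrow> 'v) set set" where
  "boundary adj = {{f'. is_ray adj f' \<and> ray_equiv f f'} | f. is_ray adj f}"

definition ray_to :: "'v \<Rightarrow> (nat \<Rightarrow> 'v) set \<Rightarrow> nat \<Rightarrow> 'v" where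
  "ray_to x \<omega> = (THE f. f \<in> \<omega> \<and> f 0 = x)"

definition confl :: "'v \<Rightarrow> 'v \<Rightarrow> (nat \<Rightarrow> 'v) set \<Rightarrow> 'v" where
  "confl o' x \<omega> = (THE y. range (ray_to o' \<omega>) \<inter> range (ray_to x \<omega>) = range (ray_to y \<omega>))"

definition pairing :: "('v \<Rightarrow> 'v \<Rightarrow> bool) \<Rightarrow> 'v \<Rightarrow> 'v \<Rightarrow> (nat \<Rightarrow> 'v) set \<Rightarrow> int" where
  "pairing adj o' x \<omega> =
     int (gdist adj o' (confl o' x \<omega>)) - int (gdist adj x (confl o' x \<omega>))"

definition is_line :: "('v \<Rightarrow> 'v \<Rightarrow> bool) \<Rightarrow> (nat \<Rightarrow> 'v) set \<Rightarrow> (nat \<Rightarrow> 'v) set \<Rightarrow> (int \<Rightarrow> 'v) \<Rightarrow> bool" where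
  "is_line adj \<omega>m \<omega>p l \<longleftrightarrow> (\<forall>n. adj (l n) (l (n + 1)) \<and> l n \<noteq> l (n + 2))
     \<and> (\<lambda>i. l (int i)) \<in> \<omega>p \<and> (\<lambda>i. l (- int i)) \<in> \<omega>m"

definition aut :: "('v \<Rightarrow> 'v \<Rightarrow> bool) \<Rightarrow> ('v \<Rightarrow> 'v) set" where
  "aut adj = {g. bij g \<and> (\<forall>x y. adj x y \<longleftrightarrow> adj (g x) (g y))}"

definition bact :: "('v \<Rightarrow> 'v) \<Rightarrow> (nat \<Rightarrow> 'v) set \<Rightarrow> (nat \<Rightarrow> 'v) set" where
  "bact g \<omega> = (\<lambda>f. g \<circ> f) ` \<omega>"

definition tpow :: "('v \<Rightarrow> 'v) \<Rightarrow> int \<Rightarrow> 'v \<Rightarrow> 'v" where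
  "tpow t j = (if 0 \<le> j then t ^^ nat j else inv t ^^ nat (- j))"

definition stabK :: "('v \<Rightarrow> 'v \<Rightarrow> bool) \<Rightarrow> 'v \<Rightarrow> ('v \<Rightarrow> 'v) set" where
  "stabK adj o' = {k \<in> aut adj. k o' = o'}"

definition Bplus :: "('v \<Rightarrow> 'v \<Rightarrow> bool) \<Rightarrow> (nat \<Rightarrow> 'v) set \<Rightarrow> ('v \<Rightarrow> 'v) set" where
  "Bplus adj \<omega>p = {n \<in> aut adj. bact n \<omega>p = \<omega>p \<and> (\<exists>v. n v = v)}"

definition Hc :: "('v \<Rightarrow> 'v \<Rightarrow> bool) \<Rightarrow> 'v \<Rightarrow> (nat \<Rightarrow> 'v) set \<Rightarrow> ('v \<Rightarrow> 'v) \<Rightarrow> ('v \<Rightarrow> 'v) \<Rightarrow> int" where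
  "Hc adj o' \<omega>p t g = (THE j. \<exists>k n. k \<in> stabK adj o' \<and> n \<in> Bplus adj \<omega>p \<and> g = k \<circ> n \<circ> tpow t j)"

text \<open>d_{s,s'}(gM) = q^{(1/2+is)H(g)} q^{(1/2+is')H(gr)}, written as a function of the
  representative g.\<close>
definition dfun :: "('v \<Rightarrow> 'v \<Rightarrow> bool) \<Rightarrow> nat \<Rightarrow> 'v \<Rightarrow> (nat \<Rightarrow> 'v) set \<Rightarrow> ('v \<Rightarrow> 'v) \<Rightarrow> ('v \<Rightarrow> 'v)
     \<Rightarrow> complex \<Rightarrow> complex \<Rightarrow> ('v \<Rightarrow> 'v) \<Rightarrow> complex" where
  "dfun adj q o' \<omega>p t r s s' g =
     (complex_of_nat q) powr ((1/2 + \<i> * s) * of_int (Hc adj o' \<omega>p t g)) *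
     (complex_of_nat q) powr ((1/2 + \<i> * s') * of_int (Hc adj o' \<omega>p t (g \<circ> r)))"

end

(*
  For g = k n \<tau>^j, the vertex g o lies j steps closer to the end g \<omega>+ than o does, since k
  fixes o and \<omega>+ is fixed by n (which fixes some vertex) and by \<tau>. Hence H(g) is the Busemann
  cocycle of the end g \<omega>+ evaluated at (o, g o), and, as r fixes o and swaps \<omega>+ and \<omega>-,
  H(g r) is the same quantity for the end g \<omega>-. Both transformation rules then follow from the
  cocycle identity, the invariance of the cocycle under automorphisms, and the fact that the
  pairing <x, \<omega>> is the cocycle of \<omega> at (o, x); for (ii) one also uses that \<tau>^n fixes
  \<omega>+ and \<omega>- and moves o by n steps along the line. Since H is defined by a definite
  description, the decomposition g = k n \<tau>^j must also be shown to exist: this needs the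
  stabiliser of o to act transitively on the ends, which holds because the tree is regular.
*)

theory Submission
  imports Defs "HOL-Combinatorics.Transposition"
begin

lemma aut_bij: "g \<in> aut adj \<Longrightarrow> bij g"
  unfolding aut_def by blast

lemma aut_adj_iff: "g \<in> aut adj \<Longrightarrow> adj (g x) (g y) \<longleftrightarrow> adj x y"
  unfolding aut_def by blast

lemma aut_id: "id \<in> aut adj"
  unfolding aut_def by simp

lemma aut_comp: "g \<in> aut adj \<Longrightarrow> h \<in> aut adj \<Longrightarrow> g \<circ> h \<in> aut adj"
  unfolding aut_def by (auto intro: bij_comp)

lemma aut_inv: assumes g: "g \<in> aut adj" shows "inv g \<in> aut adj"
proof -
  have "adj (inv g x) (inv g y) \<longleftrightarrow> adj x y" for x y
    using aut_adj_iff[OF g, of "inv g x" "inv g y"] aut_bij[OF g]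
    by (simp add: bij_is_surj surj_f_inv_f)
  then show ?thesis unfolding aut_def using aut_bij[OF g] bij_imp_bij_inv by auto
qed

lemma aut_inv_comp: "g \<in> aut adj \<Longrightarrow> inv g \<circ> g = id"
  by (simp add: aut_bij bij_is_inj)

lemma aut_comp_inv: "g \<in> aut adj \<Longrightarrow> g \<circ> inv g = id"
  using aut_bij[of g adj] bij_is_surj surj_iff by blast

lemma aut_funpow: "g \<in> aut adj \<Longrightarrow> g ^^ n \<in> aut adj"
  by (induction n) (auto simp: aut_id aut_comp)

lemma aut_tpow: "t \<in> aut adj \<Longrightarrow> tpow t j \<in> aut adj"
  unfolding tpow_def by (simp add: aut_funpow aut_inv)

lemma aut_ray_iff: assumes g: "g \<in> aut adj" shows "is_ray adj (g \<circ> f) \<longleftrightarrow> is_ray adj f"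
proof -
  have "inj g" using aut_bij[OF g] bij_is_inj by blast
  then show ?thesis using aut_adj_iff[OF g] unfolding is_ray_def by (simp add: inj_eq)
qed

lemma bact_id [simp]: "bact id \<omega> = \<omega>"
  unfolding bact_def by simp

lemma bact_comp: "bact (g \<circ> h) \<omega> = bact g (bact h \<omega>)"
  unfolding bact_def by (simp add: image_image comp_assoc)

lemma bact_inv: assumes "g \<in> aut adj" "bact g \<omega> = \<omega>" shows "bact (inv g) \<omega> = \<omega>"
  using bact_comp[of "inv g" g \<omega>] assms aut_inv_comp[OF assms(1)] by simp

lemma bact_funpow: "bact g \<omega> = \<omega> \<Longrightarrow> bact (g ^^ n) \<omega> = \<omega>"
  by (induction n) (simp_all add: bact_comp)

lemma bact_tpow: "t \<in> aut adj \<Longrightarrow> bact t \<omega> = \<omega> \<Longrightarrow> bact (tpow t j) \<omega> = \<omega>"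
  unfolding tpow_def by (simp add: bact_funpow bact_inv)

lemma funpow_left_inverse:
  fixes f g :: "'a \<Rightarrow> 'a"
  shows "(\<And>x. g (f x) = x) \<Longrightarrow> (g ^^ n) ((f ^^ n) x) = x"
proof (induction n arbitrary: x)
  case (Suc n)
  then show ?case by (metis funpow_swap1 funpow.simps(2) comp_apply)
qed simp

lemma tpow_neg_comp: assumes "bij t" shows "tpow t (- j) \<circ> tpow t j = id"
proof -
  have "inv t (t x) = x" "t (inv t x) = x" for x
    using assms by (simp_all add: bij_is_inj bij_is_surj surj_f_inv_f)
  then show ?thesis
    unfolding tpow_def by (auto intro!: ext funpow_left_inverse)
qed

section \<open>Geodesics in a tree\<close>

locale tree_graph =
  fixes adj :: "'v \<Rightarrow> 'v \<Rightarrow> bool"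
  assumes tree: "is_tree adj"
begin

abbreviation d :: "'v \<Rightarrow> 'v \<Rightarrow> nat" where "d \<equiv> gdist adj"

lemma adj_sym: "adj x y \<Longrightarrow> adj y x"
  using tree unfolding is_tree_def by blast

lemma nb_walk_not_closed: "nb_walk adj f n \<Longrightarrow> 0 < n \<Longrightarrow> f 0 \<noteq> f n"
  using tree unfolding is_tree_def by blast

lemma gdist_walk: "\<exists>f. walk adj f (d x y) \<and> f 0 = x \<and> f (d x y) = y"
proof -
  have "\<exists>n f. walk adj f n \<and> f 0 = x \<and> f n = y"
    using tree unfolding is_tree_def by blast
  then show ?thesis
    unfolding gdist_def by (rule LeastI_ex)
qed

lemma gdist_le_walk: "walk adj f n \<Longrightarrow> d (f 0) (f n) \<le> n"
  unfolding gdist_def by (rule Least_le) blast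

lemma gdist_self [simp]: "d x x = 0"
  using gdist_le_walk[of "\<lambda>_. x" 0] by (simp add: walk_def)

lemma gdist_eq_0_iff [simp]: "d x y = 0 \<longleftrightarrow> x = y"
  using gdist_walk[of x y] by auto

lemma gdist_adj_le: "adj x y \<Longrightarrow> d x y \<le> 1"
  using gdist_le_walk[of "\<lambda>i. if i = 0 then x else y" 1] by (simp add: walk_def)

lemma walk_reverse: "walk adj f n \<Longrightarrow> walk adj (\<lambda>i. f (n - i)) n"
  unfolding walk_def
proof (intro allI impI)
  fix i assume "\<forall>i<n. adj (f i) (f (Suc i))" and "i < n"
  then have "adj (f (n - Suc i)) (f (Suc (n - Suc i)))" by simp
  then show "adj (f (n - i)) (f (n - Suc i))"
    using \<open>i < n\<close> adj_sym by (simp add: Suc_diff_Suc)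
qed

lemma walk_append:
  assumes "walk adj f m" "walk adj g n" "f m = g 0"
  shows "walk adj (\<lambda>i. if i \<le> m then f i else g (i - m)) (m + n)"
  unfolding walk_def
proof (intro allI impI)
  fix i assume "i < m + n"
  then show "adj (if i \<le> m then f i else g (i - m))
      (if Suc i \<le> m then f (Suc i) else g (Suc i - m))"
    using assms unfolding walk_def
    by (cases "i < m"; cases "i = m") (auto simp: Suc_diff_le)
qed

lemma gdist_commute: "d x y = d y x"
proof -
  have "d y x \<le> d x y" for x y
  proof -
    obtain f where "walk adj f (d x y)" "f 0 = x" "f (d x y) = y" using gdist_walk by blast
    then show ?thesis using gdist_le_walk[OF walk_reverse] by fastforce
  qed
  then show ?thesis by (simp add: le_antisym)
qed

lemma gdist_triangle: "d x z \<le> d x y + d y z"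
proof -
  obtain f where f: "walk adj f (d x y)" "f 0 = x" "f (d x y) = y" using gdist_walk by blast
  obtain g where g: "walk adj g (d y z)" "g 0 = y" "g (d y z) = z" using gdist_walk by blast
  show ?thesis
    using gdist_le_walk[OF walk_append[OF f(1) g(1)]] f g by (cases "d y z = 0") auto
qed

lemma geodesic:
  "\<exists>f. walk adj f (d x y) \<and> f 0 = x \<and> f (d x y) = y \<and> (\<forall>i\<le>d x y. d x (f i) = i)"
proof -
  obtain f where f: "walk adj f (d x y)" "f 0 = x" "f (d x y) = y" using gdist_walk by blast
  have "d x (f i) = i" if i: "i \<le> d x y" for i
  proof -
    have "d x (f i) \<le> i"
      using gdist_le_walk[of f i] f i by (simp add: walk_def)
    moreover have "d (f i) y \<le> d x y - i"
      using gdist_le_walk[of "\<lambda>j. f (j + i)" "d x y - i"] f i by (simp add: walk_def)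
    ultimately show ?thesis
      using gdist_triangle[of x y "f i"] i by linarith
  qed
  then show ?thesis using f by blast
qed

lemma tent_walk_not_closed:
  assumes h: "walk adj h N" "0 < N" "h 0 = h N"
    and profile: "\<And>j. j \<le> N \<Longrightarrow> d x (h j) = min j (N - j)"
    and apex: "\<And>j. j + 2 = N - j \<Longrightarrow> h j \<noteq> h (j + 2)"
  shows False
proof -
  have "h j \<noteq> h (j + 2)" if "j + 2 \<le> N" for j
  proof (cases "j + 2 = N - j")
    case False
    have "min j (N - j) \<noteq> min (j + 2) (N - (j + 2))"
      using False that unfolding min_def by arith
    then show ?thesis using profile[of j] profile[of "j + 2"] that by auto
  qed (rule apex)
  then have "nb_walk adj h N" using h(1) unfolding nb_walk_def by blast
  then show False using nb_walk_not_closed h(2,3) by blast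
qed

lemma adj_gdist_neq:
  assumes ab: "adj a b" shows "d x a \<noteq> d x b"
proof
  assume e: "d x a = d x b"
  define m where "m = d x a"
  obtain p where p: "walk adj p m" "p 0 = x" "p m = a" "\<forall>i\<le>m. d x (p i) = i"
    using geodesic[of x a] unfolding m_def by blast
  obtain p' where p': "walk adj p' m" "p' 0 = x" "p' m = b" "\<forall>i\<le>m. d x (p' i) = i"
    using geodesic[of x b] unfolding m_def e by blast
  define h where "h j = (if j \<le> m then p j else p' (2 * m + 1 - j))" for j
  have hw: "walk adj h (2 * m + 1)"
    unfolding walk_def
  proof (intro allI impI)
    fix i assume "i < 2 * m + 1"
    then consider "i < m" | "i = m" | "m < i" "2 * m + 1 - i = Suc (2 * m + 1 - Suc i)"
      by linarith
    then show "adj (h i) (h (Suc i))"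
    proof cases
      case 3
      then have "adj (p' (2 * m + 1 - Suc i)) (p' (2 * m + 1 - i))"
        using p'(1) unfolding walk_def by simp
      then show ?thesis using 3 adj_sym unfolding h_def by simp
    qed (use p(1) ab p(3) p'(3) in \<open>auto simp: h_def walk_def\<close>)
  qed
  have hd: "d x (h j) = min j (2 * m + 1 - j)" if "j \<le> 2 * m + 1" for j
    using p(4) p'(4) that unfolding h_def by auto
  show False
  proof (rule tent_walk_not_closed[OF hw _ _ hd])
    show "h j \<noteq> h (j + 2)" if "j + 2 = 2 * m + 1 - j" for j
      using that by presburger
  qed (use p(2) p'(2) in \<open>auto simp: h_def\<close>)
qed

lemma adj_gdist_cases: "adj a b \<Longrightarrow> d x b = d x a + 1 \<or> d x a = d x b + 1"
  using gdist_triangle[of x b a] gdist_triangle[of x a b] gdist_adj_le[of a b]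
    gdist_adj_le[of b a] adj_sym[of a b] adj_gdist_neq[of a b x]
  by (simp add: gdist_commute[of a b]) linarith

lemma parent_unique:
  assumes za: "adj z a" and zb: "adj z b"
    and ea: "d x a + 1 = d x z" and eb: "d x b + 1 = d x z"
  shows "a = b"
proof (rule ccontr)
  assume ne: "a \<noteq> b"
  define m where "m = d x a"
  obtain p where p: "walk adj p m" "p 0 = x" "p m = a" "\<forall>i\<le>m. d x (p i) = i"
    using geodesic[of x a] unfolding m_def by blast
  have "d x b = m" using ea eb unfolding m_def by simp
  then obtain p' where p': "walk adj p' m" "p' 0 = x" "p' m = b" "\<forall>i\<le>m. d x (p' i) = i"
    using geodesic[of x b] by blast
  define h where "h j = (if j \<le> m then p j else if j = m + 1 then z else p' (2 * m + 2 - j))" for j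
  have hw: "walk adj h (2 * m + 2)"
    unfolding walk_def
  proof (intro allI impI)
    fix i assume "i < 2 * m + 2"
    then consider "i < m" | "i = m" | "i = m + 1"
      | "m + 1 < i" "2 * m + 2 - i = Suc (2 * m + 2 - Suc i)"
      by linarith
    then show "adj (h i) (h (Suc i))"
    proof cases
      case 4
      then have "adj (p' (2 * m + 2 - Suc i)) (p' (2 * m + 2 - i))"
        using p'(1) unfolding walk_def by simp
      then show ?thesis using 4 adj_sym unfolding h_def by simp
    qed (use p(1) adj_sym[OF za] zb p(3) p'(3) in \<open>auto simp: h_def walk_def\<close>)
  qed
  have hd: "d x (h j) = min j (2 * m + 2 - j)" if "j \<le> 2 * m + 2" for j
    using p(4) p'(4) ea m_def that unfolding h_def by auto
  show False
  proof (rule tent_walk_not_closed[OF hw _ _ hd])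
    show "h j \<noteq> h (j + 2)" if "j + 2 = 2 * m + 2 - j" for j
    proof -
      have "j = m" using that by linarith
      then show ?thesis using ne p(3) p'(3) by (simp add: h_def)
    qed
  qed (use p(2) p'(2) in \<open>auto simp: h_def\<close>)
qed

section \<open>Rays and ends\<close>

lemma ray_adj: "is_ray adj f \<Longrightarrow> adj (f i) (f (Suc i))"
  unfolding is_ray_def by blast

lemma ray_no_backtrack: "is_ray adj f \<Longrightarrow> f i \<noteq> f (i + 2)"
  unfolding is_ray_def by blast

lemma ray_shift: "is_ray adj f \<Longrightarrow> is_ray adj (\<lambda>i. f (i + k))"
  unfolding is_ray_def by (simp add: add.commute add.left_commute)

lemma ray_gdist_start: assumes f: "is_ray adj f" shows "d (f 0) (f i) = i"
proof (induction i rule: less_induct)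
  case (less i)
  show ?case
  proof (cases i)
    case (Suc j)
    have dj: "d (f 0) (f j) = j" using less Suc by simp
    from adj_gdist_cases[OF ray_adj[OF f, of j], of "f 0"] dj
    consider "d (f 0) (f i) = j + 1" | "j = d (f 0) (f i) + 1" using Suc by auto
    then show ?thesis
    proof cases
      case 2
      then obtain k where k: "j = Suc k" by (cases j) auto
      have "f k = f (k + 2)"
      proof (rule parent_unique[of "f j" _ _ "f 0"])
        show "adj (f j) (f k)" using adj_sym[OF ray_adj[OF f, of k]] k by simp
        show "adj (f j) (f (k + 2))" using ray_adj[OF f, of j] k by simp
        show "d (f 0) (f k) + 1 = d (f 0) (f j)" using less[of k] Suc k dj by simp
        show "d (f 0) (f (k + 2)) + 1 = d (f 0) (f j)" using 2 dj k Suc by simp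
      qed
      then show ?thesis using ray_no_backtrack[OF f] by blast
    qed (use Suc in simp)
  qed simp
qed

lemma ray_gdist: "is_ray adj f \<Longrightarrow> d (f k) (f (i + k)) = i"
  using ray_gdist_start[OF ray_shift[of f k], of i] by simp

lemma ray_inj: assumes f: "is_ray adj f" shows "inj f"
proof (rule linorder_injI)
  fix i j :: nat assume "i < j"
  then show "f i \<noteq> f j" using ray_gdist[OF f, of i "j - i"] by auto
qed

lemma ray_equiv_refl: "ray_equiv f f"
  unfolding ray_equiv_def by blast

lemma ray_equiv_sym: "ray_equiv f g \<Longrightarrow> ray_equiv g f"
  unfolding ray_equiv_def by metis

lemma ray_equiv_trans:
  assumes "ray_equiv f g" "ray_equiv g h" shows "ray_equiv f h"
proof -
  obtain k m where km: "\<And>i. f (i + k) = g (i + m)" using assms(1) unfolding ray_equiv_def by blast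
  obtain k' m' where km': "\<And>i. g (i + k') = h (i + m')"
    using assms(2) unfolding ray_equiv_def by blast
  have "f (i + (k + k')) = h (i + (m + m'))" for i
    using km[of "i + k'"] km'[of "i + m"] by (simp add: ac_simps)
  then show ?thesis unfolding ray_equiv_def by blast
qed

lemma ray_equiv_shift: "ray_equiv f (\<lambda>i. f (i + k))"
  unfolding ray_equiv_def by (rule exI[of _ k], rule exI[of _ 0]) simp

lemma ray_eqI:
  assumes f: "is_ray adj f" and g: "is_ray adj g" and start: "f 0 = g 0" and eq: "ray_equiv f g"
  shows "f = g"
proof -
  obtain k m where km: "\<And>i. f (i + k) = g (i + m)" using eq unfolding ray_equiv_def by blast
  have "m = k"
    using km[of 0] ray_gdist_start[OF f, of k] ray_gdist_start[OF g, of m] start by simp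
  \<comment> \<open>The rays agree from index k on; going back towards the common start, each vertex
    is the unique neighbour one step closer to it.\<close>
  have agree: "f (k - j) = g (k - j)" if "j \<le> k" for j
    using that
  proof (induction j)
    case 0 then show ?case using km[of 0] \<open>m = k\<close> by simp
  next
    case (Suc j)
    have s: "k - j = Suc (k - Suc j)" using Suc.prems by simp
    have fg: "f (k - j) = g (k - j)" using Suc by simp
    show ?case
    proof (rule parent_unique[of "f (k - j)" _ _ "f 0"])
      show "adj (f (k - j)) (f (k - Suc j))" using adj_sym[OF ray_adj[OF f]] s by metis
      show "adj (f (k - j)) (g (k - Suc j))" using adj_sym[OF ray_adj[OF g]] s fg by metis
      show "d (f 0) (f (k - Suc j)) + 1 = d (f 0) (f (k - j))"
        using ray_gdist_start[OF f] s by simp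
      show "d (f 0) (g (k - Suc j)) + 1 = d (f 0) (f (k - j))"
        using ray_gdist_start[OF f] ray_gdist_start[OF g] s start by simp
    qed
  qed
  show ?thesis
  proof
    fix i
    show "f i = g i"
      using agree[of "k - i"] km[of "i - k"] \<open>m = k\<close> by (cases "i \<le> k") auto
  qed
qed

definition end_of :: "(nat \<Rightarrow> 'v) \<Rightarrow> (nat \<Rightarrow> 'v) set" where
  "end_of f = {f'. is_ray adj f' \<and> ray_equiv f f'}"

lemma end_of_cong: "ray_equiv f g \<Longrightarrow> end_of f = end_of g"
  unfolding end_of_def using ray_equiv_trans ray_equiv_sym by blast

lemma end_of_in_boundary: "is_ray adj f \<Longrightarrow> end_of f \<in> boundary adj"
  unfolding boundary_def end_of_def by blast

lemma boundary_memD: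
  assumes "\<omega> \<in> boundary adj" "f \<in> \<omega>" shows "is_ray adj f" "\<omega> = end_of f"
proof -
  obtain g where "\<omega> = end_of g" using assms(1) unfolding boundary_def end_of_def by blast
  with assms(2) show "is_ray adj f" "\<omega> = end_of f"
    using end_of_cong unfolding end_of_def by auto
qed

lemma boundary_memI:
  assumes "\<omega> \<in> boundary adj" "f \<in> \<omega>" "is_ray adj g" "ray_equiv f g" shows "g \<in> \<omega>"
  using assms boundary_memD[OF assms(1,2)] unfolding end_of_def by blast

lemma boundary_mem_equiv:
  assumes "\<omega> \<in> boundary adj" "f \<in> \<omega>" "g \<in> \<omega>" shows "ray_equiv f g"
  using assms boundary_memD[OF assms(1,2)] unfolding end_of_def by blast

text \<open>Every end is represented by a ray from any vertex x: follow a geodesic from x to a vertex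
  of a given ray that is closest to x, and continue along the ray.\<close>

lemma ray_from_vertex:
  assumes f: "is_ray adj f" shows "\<exists>h. is_ray adj h \<and> h 0 = x \<and> ray_equiv f h"
proof -
  obtain k where closest: "\<And>j. d x (f k) \<le> d x (f j)"
    using ex_has_least_nat[of "\<lambda>_. True" 0 "\<lambda>j. d x (f j)"] by blast
  define m where "m = d x (f k)"
  obtain p where p: "walk adj p m" "p 0 = x" "p m = f k" "\<forall>i\<le>m. d x (p i) = i"
    using geodesic[of x "f k"] unfolding m_def by blast
  define h where "h i = (if i \<le> m then p i else f (i - m + k))" for i
  have tail: "h (j + m) = f (j + k)" for j
    using p(3) unfolding h_def by (cases j) auto
  have walk_h: "walk adj h (m + n)" for n
  proof -
    have "walk adj (\<lambda>i. f (i + k)) n"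
      using ray_adj[OF f] unfolding walk_def by simp
    from walk_append[OF p(1) this] show ?thesis
      using p(3) unfolding h_def by (simp add: ac_simps)
  qed
  have far: "i < d x (h (i + 2))" if "i < m" for i
  proof (cases "i + 2 \<le> m")
    case False
    then have "h (i + 2) = f (i + 2 - m + k)" unfolding h_def by simp
    then show ?thesis using closest[of "i + 2 - m + k"] that m_def by simp
  qed (use p(4) in \<open>simp add: h_def\<close>)
  have "is_ray adj h"
    unfolding is_ray_def
  proof (intro allI conjI)
    fix i
    show "adj (h i) (h (Suc i))" using walk_h[of "Suc i"] unfolding walk_def by simp
    show "h i \<noteq> h (i + 2)"
    proof (cases "i < m")
      case True
      then have "d x (h i) = i" using p(4) by (simp add: h_def)
      then show ?thesis using far[OF True] by (metis less_irrefl)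
    next
      case False
      then obtain j where "i = j + m" using le_Suc_ex not_less by (metis add.commute)
      then show ?thesis using tail[of j] tail[of "j + 2"] ray_no_backtrack[OF f, of "j + k"]
        by (simp add: ac_simps)
    qed
  qed
  moreover have "ray_equiv f h"
    unfolding ray_equiv_def using tail by (metis add.commute)
  ultimately show ?thesis using p(2) unfolding h_def by auto
qed

lemma ray_to_eq:
  assumes "\<omega> \<in> boundary adj" "f \<in> \<omega>" "f 0 = x" shows "ray_to x \<omega> = f"
  unfolding ray_to_def
proof (rule the_equality)
  fix g assume "g \<in> \<omega> \<and> g 0 = x"
  then show "g = f"
    using ray_eqI boundary_memD(1) boundary_mem_equiv assms by metis
qed (use assms in simp)

lemma ray_to_in_end:
  assumes w: "\<omega> \<in> boundary adj" shows "ray_to x \<omega> \<in> \<omega>" "ray_to x \<omega> 0 = x"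
proof -
  obtain f where "f \<in> \<omega>"
    using w unfolding boundary_def by (blast intro: ray_equiv_refl)
  then obtain h where h: "is_ray adj h" "h 0 = x" "ray_equiv f h"
    using ray_from_vertex boundary_memD(1)[OF w] by blast
  then have "h \<in> \<omega>" using boundary_memI[OF w \<open>f \<in> \<omega>\<close>] by blast
  then show "ray_to x \<omega> \<in> \<omega>" "ray_to x \<omega> 0 = x" using ray_to_eq[OF w] h(2) by auto
qed

lemma ray_to_is_ray: "\<omega> \<in> boundary adj \<Longrightarrow> is_ray adj (ray_to x \<omega>)"
  using ray_to_in_end boundary_memD by blast

lemma ray_to_shift:
  assumes w: "\<omega> \<in> boundary adj" shows "ray_to (ray_to x \<omega> k) \<omega> = (\<lambda>i. ray_to x \<omega> (i + k))"
  by (rule ray_to_eq[OF w boundary_memI[OF w ray_to_in_end(1)[OF w]]])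
    (auto intro: ray_shift ray_to_is_ray[OF w] ray_equiv_shift)

section \<open>The Busemann cocycle\<close>

text \<open>The rays from x and from y towards \<omega> merge; if they do so after a and b steps
  respectively, then busemann \<omega> x y = a - b measures how much closer to \<omega> the vertex y lies.\<close>

definition busemann :: "(nat \<Rightarrow> 'v) set \<Rightarrow> 'v \<Rightarrow> 'v \<Rightarrow> int" where
  "busemann \<omega> x y =
     (THE z. \<exists>a b. (\<forall>i. ray_to x \<omega> (i + a) = ray_to y \<omega> (i + b)) \<and> z = int a - int b)"

lemma busemann_eq:
  assumes w: "\<omega> \<in> boundary adj" and ab: "\<And>i. ray_to x \<omega> (i + a) = ray_to y \<omega> (i + b)"
  shows "busemann \<omega> x y = int a - int b"
  unfolding busemann_def
proof (rule the_equality)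
  fix z assume "\<exists>a' b'. (\<forall>i. ray_to x \<omega> (i + a') = ray_to y \<omega> (i + b')) \<and> z = int a' - int b'"
  then obtain a' b' where ab': "\<And>i. ray_to x \<omega> (i + a') = ray_to y \<omega> (i + b')"
    and z: "z = int a' - int b'" by blast
  have "ray_to y \<omega> (b + (a' - a)) = ray_to y \<omega> (b' + (a - a'))"
    using ab[of "a' - a"] ab'[of "a - a'"] by (cases "a \<le> a'") (simp_all add: ac_simps)
  then have "b + (a' - a) = b' + (a - a')"
    using ray_inj[OF ray_to_is_ray[OF w]] by (simp add: inj_eq)
  then show "z = int a - int b" using z by linarith
qed (use ab in blast)

lemma busemann_merge:
  "\<omega> \<in> boundary adj \<Longrightarrow> \<exists>a b. \<forall>i. ray_to x \<omega> (i + a) = ray_to y \<omega> (i + b)"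
  using boundary_mem_equiv ray_to_in_end(1) unfolding ray_equiv_def by blast

lemma busemann_self: "\<omega> \<in> boundary adj \<Longrightarrow> busemann \<omega> x x = 0"
  using busemann_eq[of \<omega> x 0 x 0] by simp

lemma busemann_cocycle:
  assumes w: "\<omega> \<in> boundary adj" shows "busemann \<omega> x z = busemann \<omega> x y + busemann \<omega> y z"
proof -
  obtain a b where ab: "\<And>i. ray_to x \<omega> (i + a) = ray_to y \<omega> (i + b)"
    using busemann_merge[OF w] by blast
  obtain a' b' where ab': "\<And>i. ray_to y \<omega> (i + a') = ray_to z \<omega> (i + b')"
    using busemann_merge[OF w] by blast
  have "ray_to x \<omega> (i + (a + a')) = ray_to z \<omega> (i + (b + b'))" for i
    using ab[of "i + a'"] ab'[of "i + b"] by (simp add: ac_simps)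
  then have "busemann \<omega> x z = int (a + a') - int (b + b')" by (rule busemann_eq[OF w])
  then show ?thesis using busemann_eq[OF w ab] busemann_eq[OF w ab'] by simp
qed

lemma ray_to_range_inj:
  assumes w: "\<omega> \<in> boundary adj" and e: "range (ray_to y \<omega>) = range (ray_to y' \<omega>)"
  shows "y = y'"
proof -
  obtain a where a: "y' = ray_to y \<omega> a"
    using e ray_to_in_end(2)[OF w, of y'] by (metis rangeE rangeI)
  obtain b where "y = ray_to y' \<omega> b"
    using e ray_to_in_end(2)[OF w, of y] by (metis rangeE rangeI)
  then have "ray_to y \<omega> 0 = ray_to y \<omega> (b + a)"
    using ray_to_shift[OF w, of y a] ray_to_in_end(2)[OF w, of y] a by simp
  then have "b + a = 0" using ray_inj[OF ray_to_is_ray[OF w]] by (metis injD)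
  then show ?thesis using a ray_to_in_end(2)[OF w] by simp
qed

lemma confl_eq:
  assumes "\<omega> \<in> boundary adj" "range (ray_to x \<omega>) \<inter> range (ray_to y \<omega>) = range (ray_to z \<omega>)"
  shows "confl x y \<omega> = z"
  unfolding confl_def using assms ray_to_range_inj by (intro the_equality) auto

text \<open>The confluence point in the definition of the pairing is the vertex where the rays
  from o' and from x towards \<omega> merge.\<close>

lemma pairing_eq_busemann:
  assumes w: "\<omega> \<in> boundary adj" shows "pairing adj o' x \<omega> = busemann \<omega> o' x"
proof -
  define R where "R = ray_to o' \<omega>"
  define S where "S = ray_to x \<omega>"
  obtain a b where "\<And>i. R (i + a) = S (i + b)"
    using busemann_merge[OF w] unfolding R_def S_def by blast
  then have "R a \<in> range S" by (metis add_0 rangeI)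
  define a0 where "a0 = (LEAST a. R a \<in> range S)"
  have "R a0 \<in> range S" unfolding a0_def by (rule LeastI) fact
  then obtain b0 where b0: "R a0 = S b0" by auto
  have a0_min: "a0 \<le> c" if "R c \<in> range S" for c unfolding a0_def using that by (rule Least_le)
  define y where "y = R a0"
  have Ry: "ray_to y \<omega> = (\<lambda>i. R (i + a0))" unfolding y_def R_def by (rule ray_to_shift[OF w])
  have Sy: "ray_to y \<omega> = (\<lambda>i. S (i + b0))" unfolding y_def b0 S_def by (rule ray_to_shift[OF w])
  have "range R \<inter> range S = range (ray_to y \<omega>)"
  proof (intro equalityI subsetI)
    fix z assume "z \<in> range R \<inter> range S"
    then obtain c where "z = R c" "R c \<in> range S" by auto
    then show "z \<in> range (ray_to y \<omega>)"
      using a0_min Ry by (metis le_add_diff_inverse2 rangeI)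
  next
    fix z assume "z \<in> range (ray_to y \<omega>)"
    then obtain i where "z = ray_to y \<omega> i" by auto
    then show "z \<in> range R \<inter> range S" using Ry Sy by (metis IntI rangeI)
  qed
  then have "confl o' x \<omega> = y" using confl_eq[OF w] unfolding R_def S_def by blast
  moreover have "d o' y = a0" "d x y = b0"
    using ray_gdist_start[OF ray_to_is_ray[OF w]] ray_to_in_end(2)[OF w] b0
    unfolding y_def R_def S_def by metis+
  moreover have "busemann \<omega> o' x = int a0 - int b0"
    using busemann_eq[OF w] Ry Sy unfolding R_def S_def by metis
  ultimately show ?thesis unfolding pairing_def by simp
qed

lemma is_line_reverse: "is_line adj \<omega>m \<omega>p l \<Longrightarrow> is_line adj \<omega>p \<omega>m (\<lambda>k. l (- k))"
  unfolding is_line_def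
proof (intro allI conjI; elim conjE)
  fix n assume line: "\<forall>n. adj (l n) (l (n + 1)) \<and> l n \<noteq> l (n + 2)"
  show "adj (l (- n)) (l (- (n + 1)))" using adj_sym line[rule_format, of "- n - 1"] by simp
  show "l (- n) \<noteq> l (- (n + 2))" using line[rule_format, of "- n - 2"] by (simp add: eq_commute)
qed auto

lemma line_ray: assumes "is_line adj \<omega>m \<omega>p l" shows "is_ray adj (\<lambda>i. l (a + int i))"
  unfolding is_ray_def
proof
  fix i
  have "adj (l (a + int i)) (l (a + int i + 1)) \<and> l (a + int i) \<noteq> l (a + int i + 2)"
    using assms unfolding is_line_def by blast
  then show "adj (l (a + int i)) (l (a + int (Suc i))) \<and> l (a + int i) \<noteq> l (a + int (i + 2))"
    by (simp add: algebra_simps)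
qed

lemma line_ray_in_end:
  assumes line: "is_line adj \<omega>m \<omega>p l" and w: "\<omega>p \<in> boundary adj"
  shows "(\<lambda>i. l (a + int i)) \<in> \<omega>p"
proof (rule boundary_memI[OF w _ line_ray[OF line]])
  show "(\<lambda>i. l (int i)) \<in> \<omega>p" using line unfolding is_line_def by blast
  have "l (int (i + nat a)) = l (a + int (i + nat (- a)))" for i by (simp add: algebra_simps)
  then show "ray_equiv (\<lambda>i. l (int i)) (\<lambda>i. l (a + int i))" unfolding ray_equiv_def by blast
qed

lemma busemann_line:
  assumes line: "is_line adj \<omega>m \<omega>p l" and w: "\<omega>p \<in> boundary adj"
  shows "busemann \<omega>p (l a) (l b) = b - a"
proof -
  have ray_to_line: "ray_to (l a) \<omega>p = (\<lambda>i. l (a + int i))" for a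
    by (rule ray_to_eq[OF w line_ray_in_end[OF line w]]) simp
  have "ray_to (l a) \<omega>p (i + nat (b - a)) = ray_to (l b) \<omega>p (i + nat (a - b))" for i
    unfolding ray_to_line by (simp add: algebra_simps)
  then have "busemann \<omega>p (l a) (l b) = int (nat (b - a)) - int (nat (a - b))"
    by (rule busemann_eq[OF w])
  then show ?thesis by simp
qed

lemma ray_equiv_comp_iff: "inj g \<Longrightarrow> ray_equiv (g \<circ> f) (g \<circ> h) \<longleftrightarrow> ray_equiv f h"
  unfolding ray_equiv_def by (simp add: inj_eq)

lemma bact_end_of:
  assumes g: "g \<in> aut adj" shows "bact g (end_of f) = end_of (g \<circ> f)"
proof -
  have "inj g" using aut_bij[OF g] bij_is_inj by blast
  then have mem: "g \<circ> h \<in> end_of (g \<circ> f) \<longleftrightarrow> h \<in> end_of f" for h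
    unfolding end_of_def using aut_ray_iff[OF g] ray_equiv_comp_iff[of g] by simp
  have "h' \<in> bact g (end_of f)" if "h' \<in> end_of (g \<circ> f)" for h'
  proof -
    have "g \<circ> (inv g \<circ> h') \<in> end_of (g \<circ> f)"
      using that aut_comp_inv[OF g] by (simp flip: comp_assoc)
    then have "inv g \<circ> h' \<in> end_of f" using mem by blast
    then show ?thesis unfolding bact_def
      by (rule rev_image_eqI) (use aut_comp_inv[OF g] in \<open>simp flip: comp_assoc\<close>)
  qed
  then show ?thesis using mem unfolding bact_def by blast
qed

lemma bact_boundary:
  assumes g: "g \<in> aut adj" and w: "\<omega> \<in> boundary adj" shows "bact g \<omega> \<in> boundary adj"
proof -
  obtain f where f: "f \<in> \<omega>" using ray_to_in_end(1)[OF w] by blast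
  have "bact g \<omega> = end_of (g \<circ> f)" using boundary_memD(2)[OF w f] bact_end_of[OF g] by simp
  then show ?thesis
    using end_of_in_boundary aut_ray_iff[OF g] boundary_memD(1)[OF w f] by simp
qed

lemma ray_to_bact:
  assumes g: "g \<in> aut adj" and w: "\<omega> \<in> boundary adj"
  shows "ray_to (g x) (bact g \<omega>) = g \<circ> ray_to x \<omega>"
  by (rule ray_to_eq[OF bact_boundary[OF g w]])
    (use ray_to_in_end[OF w] in \<open>auto simp: bact_def\<close>)

lemma busemann_bact:
  assumes g: "g \<in> aut adj" and w: "\<omega> \<in> boundary adj"
  shows "busemann (bact g \<omega>) (g x) (g y) = busemann \<omega> x y"
proof -
  obtain a b where ab: "\<And>i. ray_to x \<omega> (i + a) = ray_to y \<omega> (i + b)"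
    using busemann_merge[OF w] by blast
  then have "ray_to (g x) (bact g \<omega>) (i + a) = ray_to (g y) (bact g \<omega>) (i + b)" for i
    by (simp add: ray_to_bact[OF g w])
  then show ?thesis using busemann_eq[OF bact_boundary[OF g w]] busemann_eq[OF w ab] by simp
qed

text \<open>For \<omega> = \<omega>+ this is the Iwasawa component H(g), and for \<omega> = \<omega>- it is H(g r).\<close>

definition height :: "'v \<Rightarrow> (nat \<Rightarrow> 'v) set \<Rightarrow> ('v \<Rightarrow> 'v) \<Rightarrow> int" where
  "height o' \<omega> g = busemann (bact g \<omega>) o' (g o')"

lemma height_comp:
  assumes g: "g \<in> aut adj" and g': "g' \<in> aut adj" and w: "\<omega> \<in> boundary adj"
  shows "height o' \<omega> (g' \<circ> g) = pairing adj o' (g' o') (bact (g' \<circ> g) \<omega>) + height o' \<omega> g"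
proof -
  let ?\<xi> = "bact (g' \<circ> g) \<omega>"
  have \<xi>: "?\<xi> \<in> boundary adj" by (rule bact_boundary[OF aut_comp[OF g' g] w])
  have "height o' \<omega> (g' \<circ> g) = busemann ?\<xi> o' (g' o') + busemann ?\<xi> (g' o') (g' (g o'))"
    unfolding height_def by (simp add: busemann_cocycle[OF \<xi>, of o' "g' (g o')" "g' o'"])
  also have "busemann ?\<xi> (g' o') (g' (g o')) = height o' \<omega> g"
    unfolding bact_comp height_def by (rule busemann_bact[OF g' bact_boundary[OF g w]])
  finally show ?thesis unfolding pairing_eq_busemann[OF \<xi>] .
qed

lemma height_comp_stab:
  assumes g: "g \<in> aut adj" and h: "h \<in> aut adj" and w: "\<omega> \<in> boundary adj"
    and stab: "bact h \<omega> = \<omega>"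
  shows "height o' \<omega> (g \<circ> h) = height o' \<omega> g + busemann \<omega> o' (h o')"
proof -
  have "height o' \<omega> (g \<circ> h) = height o' \<omega> g + busemann (bact g \<omega>) (g o') (g (h o'))"
    unfolding height_def bact_comp stab
    by (simp add: busemann_cocycle[OF bact_boundary[OF g w], of o' "g (h o')" "g o'"])
  then show ?thesis unfolding busemann_bact[OF g w] .
qed

lemma height_comp_fix_base:
  assumes k: "k \<in> aut adj" and g: "g \<in> aut adj" and w: "\<omega> \<in> boundary adj" and k_o: "k o' = o'"
  shows "height o' \<omega> (k \<circ> g) = height o' \<omega> g"
  using height_comp[OF g k w, of o'] bact_boundary[OF aut_comp[OF k g] w]
  by (simp add: k_o pairing_eq_busemann busemann_self)

lemma height_eq_0_iff_fixes_vertex: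
  assumes n: "n \<in> aut adj" and w: "\<omega> \<in> boundary adj" and stab: "bact n \<omega> = \<omega>"
  shows "height o' \<omega> n = 0 \<longleftrightarrow> (\<exists>v. n v = v)"
proof
  assume "height o' \<omega> n = 0"
  then have "busemann \<omega> o' (n o') = 0" unfolding height_def stab .
  moreover obtain a b where ab: "\<And>i. ray_to o' \<omega> (i + a) = ray_to (n o') \<omega> (i + b)"
    using busemann_merge[OF w] by blast
  ultimately have "a = b" using busemann_eq[OF w ab] by simp
  moreover have "ray_to (n o') \<omega> = n \<circ> ray_to o' \<omega>"
    using ray_to_bact[OF n w, of o'] unfolding stab .
  ultimately have "n (ray_to o' \<omega> a) = ray_to o' \<omega> a" using ab[of 0] by simp
  then show "\<exists>v. n v = v" by blast
next
  assume "\<exists>v. n v = v"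
  then obtain v where v: "n v = v" by blast
  have "busemann \<omega> o' (n o') = busemann \<omega> o' v + busemann \<omega> v (n o')"
    by (rule busemann_cocycle[OF w])
  also have "busemann \<omega> v (n o') = busemann \<omega> v o'"
    using busemann_bact[OF n w, of v o'] unfolding stab v .
  also have "busemann \<omega> o' v + busemann \<omega> v o' = 0"
    using busemann_cocycle[OF w, of o' o' v] busemann_self[OF w, of o'] by simp
  finally show "height o' \<omega> n = 0" unfolding height_def stab .
qed

end

section \<open>Transitivity of a vertex stabiliser on the ends of a regular tree\<close>

lemma ex_bij_betw_nat_0:
  assumes "finite A" "a \<in> A" shows "\<exists>f. bij_betw f A {0..<card A} \<and> f a = 0"
proof -
  obtain h where h: "bij_betw h A {0..<card A}" using ex_bij_betw_finite_nat[OF assms(1)] by blast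
  have "0 < card A" using assms card_gt_0_iff by blast
  then have "0 \<in> h ` A" using bij_betw_imp_surj_on[OF h] by simp
  then obtain b where b: "b \<in> A" "h b = 0" by (metis imageE)
  have "bij_betw (Fun.swap a b h) A {0..<card A}"
    using bij_betw_swap_iff[OF assms(2) b(1)] h by blast
  moreover have "Fun.swap a b h a = 0" using b by simp
  ultimately show ?thesis by blast
qed

locale rooted_regular_tree = tree_graph adj for adj :: "'v \<Rightarrow> 'v \<Rightarrow> bool" +
  fixes q :: nat and rt :: 'v
  assumes regular: "regular adj (q + 1)"
begin

definition parent :: "'v \<Rightarrow> 'v" where
  "parent x = (THE y. adj x y \<and> d rt y + 1 = d rt x)"
  \<comment> \<open>unspecified for x = rt\<close>

definition children :: "'v \<Rightarrow> 'v set" where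
  "children x = {y. adj x y \<and> d rt y = d rt x + 1}"

lemma parent_eq: assumes "adj x y" "d rt y + 1 = d rt x" shows "parent x = y"
  unfolding parent_def using assms parent_unique by (intro the_equality) blast+

lemma parent_adj_gdist: assumes x: "x \<noteq> rt" shows "adj x (parent x)" "d rt (parent x) + 1 = d rt x"
proof -
  define m where "m = d rt x"
  obtain p where p: "walk adj p m" "p 0 = rt" "p m = x" "\<forall>i\<le>m. d rt (p i) = i"
    using geodesic[of rt x] unfolding m_def by blast
  have "m \<noteq> 0" using x unfolding m_def by simp
  then obtain m' where m': "m = Suc m'" using not0_implies_Suc by blast
  then have "adj (p m') x" using p(1,3) unfolding walk_def by auto
  then have adj: "adj x (p m')" by (rule adj_sym)
  moreover have gd: "d rt (p m') + 1 = d rt x" using p(4) m' unfolding m_def by simp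
  ultimately show "adj x (parent x)" "d rt (parent x) + 1 = d rt x"
    using parent_eq[OF adj gd] by simp_all
qed

lemma parent_child: assumes "y \<in> children x" shows "parent y = x"
proof -
  have "adj x y" "d rt y = d rt x + 1" using assms unfolding children_def by auto
  then show ?thesis using parent_eq[OF adj_sym[OF \<open>adj x y\<close>]] by simp
qed

lemma child_not_root: "y \<in> children x \<Longrightarrow> y \<noteq> rt"
  unfolding children_def by auto

lemma in_children_parent: "x \<noteq> rt \<Longrightarrow> x \<in> children (parent x)"
  using parent_adj_gdist[of x] adj_sym[of x "parent x"] unfolding children_def by simp

lemma adj_iff_parent: "adj x y \<longleftrightarrow> (y \<noteq> rt \<and> parent y = x) \<or> (x \<noteq> rt \<and> parent x = y)"
proof
  assume xy: "adj x y"
  consider "d rt y = d rt x + 1" | "d rt x = d rt y + 1" using adj_gdist_cases[OF xy] by blast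
  then show "(y \<noteq> rt \<and> parent y = x) \<or> (x \<noteq> rt \<and> parent x = y)"
  proof cases
    case 1
    then have "y \<noteq> rt" by auto
    then show ?thesis using parent_eq[OF adj_sym[OF xy]] 1 by simp
  next
    case 2
    then have "x \<noteq> rt" by auto
    then show ?thesis using parent_eq[OF xy] 2 by simp
  qed
next
  assume "(y \<noteq> rt \<and> parent y = x) \<or> (x \<noteq> rt \<and> parent x = y)"
  then show "adj x y"
    using parent_adj_gdist(1)[of x] parent_adj_gdist(1)[of y] adj_sym[of y x] by auto
qed

lemma finite_card_neighbours: "finite {y. adj x y}" "card {y. adj x y} = q + 1"
  using regular unfolding regular_def by auto

lemma finite_children: "finite (children x)"
  using finite_card_neighbours(1) by (rule finite_subset[rotated]) (auto simp: children_def)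

lemma card_children: "card (children x) = (if x = rt then q + 1 else q)"
proof -
  have "children x = {y. adj x y} - {y. adj x y \<and> d rt y + 1 = d rt x}"
  proof (rule set_eqI)
    fix y
    show "y \<in> children x \<longleftrightarrow> y \<in> {y. adj x y} - {y. adj x y \<and> d rt y + 1 = d rt x}"
      using adj_gdist_cases[of x y rt] unfolding children_def by auto
  qed
  also have "{y. adj x y \<and> d rt y + 1 = d rt x} = (if x = rt then {} else {parent x})"
  proof (cases "x = rt")
    case False
    have "adj x y \<and> d rt y + 1 = d rt x \<longleftrightarrow> y = parent x" for y
      using parent_adj_gdist[OF False] parent_eq[of x y] by auto
    then show ?thesis using False by auto
  qed simp
  finally show ?thesis
    using finite_card_neighbours[of x] parent_adj_gdist(1)[of x]
    by (cases "x = rt") (simp_all add: card_Diff_singleton)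
qed

text \<open>Relative to a ray \<rho> from the root, the children of every vertex are numbered
  0, 1, \<dots>, the child on \<rho> (if any) getting 0, and a vertex is addressed by the labels along
  its geodesic from the root. Addresses identify the tree with a set of words that does not
  depend on \<rho>, which makes the stabiliser of the root transitive on rays from it.\<close>

definition child_label :: "(nat \<Rightarrow> 'v) \<Rightarrow> 'v \<Rightarrow> 'v \<Rightarrow> nat" where
  "child_label \<rho> x = (SOME f. bij_betw f (children x) {0..<card (children x)}
     \<and> (\<rho> (d rt x) = x \<longrightarrow> f (\<rho> (Suc (d rt x))) = 0))"

primrec address_of_depth :: "(nat \<Rightarrow> 'v) \<Rightarrow> nat \<Rightarrow> 'v \<Rightarrow> nat list" where
  "address_of_depth \<rho> 0 x = []"
| "address_of_depth \<rho> (Suc n) x = address_of_depth \<rho> n (parent x) @ [child_label \<rho> (parent x) x]"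

definition address :: "(nat \<Rightarrow> 'v) \<Rightarrow> 'v \<Rightarrow> nat list" where
  "address \<rho> x = address_of_depth \<rho> (d rt x) x"

definition addresses :: "nat list set" where
  "addresses = {w. \<forall>i<length w. w ! i < (if i = 0 then q + 1 else q)}"

lemma Nil_in_addresses: "[] \<in> addresses"
  unfolding addresses_def by simp

lemma snoc_in_addresses:
  "w @ [c] \<in> addresses \<longleftrightarrow> w \<in> addresses \<and> c < (if w = [] then q + 1 else q)"
  unfolding addresses_def by (auto simp: nth_append less_Suc_eq)

lemma length_address [simp]: "length (address \<rho> x) = d rt x"
proof -
  have "length (address_of_depth \<rho> n x) = n" for n by (induction n arbitrary: x) simp_all
  then show ?thesis unfolding address_def .
qed

lemma address_eq_Nil_iff [simp]: "address \<rho> x = [] \<longleftrightarrow> x = rt"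
  using length_address[of \<rho> x] by (auto simp flip: length_0_conv)

lemma address_root [simp]: "address \<rho> rt = []"
  by simp

lemma address_parent:
  assumes "x \<noteq> rt" shows "address \<rho> x = address \<rho> (parent x) @ [child_label \<rho> (parent x) x]"
  using parent_adj_gdist(2)[OF assms] unfolding address_def
  by (metis Suc_eq_plus1 address_of_depth.simps(2))

context
  fixes \<rho> assumes \<rho>: "is_ray adj \<rho>" "\<rho> 0 = rt"
begin

lemma child_label_spec:
  "bij_betw (child_label \<rho> x) (children x) {0..<card (children x)}"
  "\<rho> (d rt x) = x \<Longrightarrow> child_label \<rho> x (\<rho> (Suc (d rt x))) = 0"
proof -
  have "\<exists>f. bij_betw f (children x) {0..<card (children x)}
      \<and> (\<rho> (d rt x) = x \<longrightarrow> f (\<rho> (Suc (d rt x))) = 0)"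
  proof (cases "\<rho> (d rt x) = x")
    case True
    then have "\<rho> (Suc (d rt x)) \<in> children x"
      using ray_adj[OF \<rho>(1), of "d rt x"] ray_gdist_start[OF \<rho>(1), of "Suc (d rt x)"] \<rho>(2)
      unfolding children_def by simp
    then show ?thesis using ex_bij_betw_nat_0[OF finite_children] by blast
  qed (use ex_bij_betw_finite_nat[OF finite_children] in blast)
  from someI_ex[OF this] show "bij_betw (child_label \<rho> x) (children x) {0..<card (children x)}"
    "\<rho> (d rt x) = x \<Longrightarrow> child_label \<rho> x (\<rho> (Suc (d rt x))) = 0"
    unfolding child_label_def by blast+
qed

lemma address_in_addresses: "address \<rho> x \<in> addresses"
proof (induction "d rt x" arbitrary: x)
  case 0
  then have "x = rt" by (metis gdist_eq_0_iff)
  then show ?case using Nil_in_addresses by simp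
next
  case (Suc n)
  then have x: "x \<noteq> rt" by auto
  have "child_label \<rho> (parent x) x < card (children (parent x))"
    using bij_betw_apply[OF child_label_spec(1) in_children_parent[OF x]] by simp
  then show ?case
    using Suc parent_adj_gdist(2)[OF x] address_parent[OF x] snoc_in_addresses card_children by simp
qed

lemma address_inj: "address \<rho> x = address \<rho> y \<Longrightarrow> x = y"
proof (induction "d rt x" arbitrary: x y)
  case 0
  then show ?case using length_address[of \<rho> x] length_address[of \<rho> y] by simp
next
  case (Suc n)
  then have x: "x \<noteq> rt" and y: "y \<noteq> rt"
    using length_address[of \<rho> x] length_address[of \<rho> y] by auto
  from Suc.prems have "address \<rho> (parent x) = address \<rho> (parent y)"
    and lab: "child_label \<rho> (parent x) x = child_label \<rho> (parent y) y"
    unfolding address_parent[OF x] address_parent[OF y] by auto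
  moreover have "d rt (parent x) = n" using parent_adj_gdist(2)[OF x] Suc.hyps by simp
  ultimately have "parent x = parent y" using Suc.hyps by blast
  then show "x = y"
    using lab in_children_parent[OF x] in_children_parent[OF y]
      bij_betw_imp_inj_on[OF child_label_spec(1)] by (metis inj_onD)
qed

lemma address_surj: "w \<in> addresses \<Longrightarrow> \<exists>x. address \<rho> x = w"
proof (induction w rule: rev_induct)
  case Nil then show ?case by simp
next
  case (snoc c w)
  then obtain x where x: "address \<rho> x = w" using snoc_in_addresses by blast
  have "w = [] \<longleftrightarrow> x = rt" using x by auto
  then have "c < card (children x)" using snoc.prems card_children snoc_in_addresses by simp
  then obtain y where y: "y \<in> children x" "child_label \<rho> x y = c"
    using bij_betw_imp_surj_on[OF child_label_spec(1)] by (metis atLeastLessThan_iff imageE zero_le)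
  then show ?case using address_parent[OF child_not_root[OF y(1)]] parent_child[OF y(1)] x by auto
qed

lemma address_snoc_iff: "(\<exists>c. address \<rho> y = address \<rho> x @ [c]) \<longleftrightarrow> y \<noteq> rt \<and> parent y = x"
proof
  assume "\<exists>c. address \<rho> y = address \<rho> x @ [c]"
  then obtain c where c: "address \<rho> y = address \<rho> x @ [c]" by blast
  then have y: "y \<noteq> rt" using length_address[of \<rho> y] by auto
  then have "address \<rho> (parent y) = address \<rho> x" using c address_parent[OF y] by simp
  then show "y \<noteq> rt \<and> parent y = x" using y address_inj by blast
next
  assume "y \<noteq> rt \<and> parent y = x"
  then show "\<exists>c. address \<rho> y = address \<rho> x @ [c]" using address_parent[of y \<rho>] by blast
qed

lemma adj_iff_address:
  "adj x y \<longleftrightarrow> (\<exists>c. address \<rho> y = address \<rho> x @ [c]) \<or> (\<exists>c. address \<rho> x = address \<rho> y @ [c])"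
  unfolding address_snoc_iff by (rule adj_iff_parent)

lemma address_ray: "address \<rho> (\<rho> i) = replicate i 0"
proof (induction i)
  case 0 then show ?case using \<rho>(2) by simp
next
  case (Suc i)
  have di: "d rt (\<rho> i) = i" "d rt (\<rho> (Suc i)) = Suc i"
    using ray_gdist_start[OF \<rho>(1)] \<rho>(2) by auto
  then have "parent (\<rho> (Suc i)) = \<rho> i"
    using parent_eq[OF adj_sym[OF ray_adj[OF \<rho>(1)]]] by simp
  moreover have "child_label \<rho> (\<rho> i) (\<rho> (Suc i)) = 0" using child_label_spec(2)[of "\<rho> i"] di by simp
  moreover have "\<rho> (Suc i) \<noteq> rt" using di by auto
  ultimately show ?case
    using address_parent[of "\<rho> (Suc i)" \<rho>] Suc.IH by (simp add: replicate_append_same)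
qed

end

lemma stabiliser_maps_ray:
  assumes \<rho>1: "is_ray adj \<rho>1" "\<rho>1 0 = rt" and \<rho>2: "is_ray adj \<rho>2" "\<rho>2 0 = rt"
  shows "\<exists>k\<in>aut adj. k rt = rt \<and> k \<circ> \<rho>1 = \<rho>2"
proof -
  define k where "k = inv_into UNIV (address \<rho>2) \<circ> address \<rho>1"
  have "address \<rho>1 x \<in> range (address \<rho>2)" for x
    using address_surj[OF \<rho>2 address_in_addresses[OF \<rho>1]] by (metis rangeI)
  then have k: "address \<rho>2 (k x) = address \<rho>1 x" for x
    unfolding k_def by (simp add: f_inv_into_f)
  have "inj k" using k address_inj[OF \<rho>1] by (metis injI)
  moreover have "surj k"
    unfolding surj_def
  proof
    fix y
    obtain x where "address \<rho>1 x = address \<rho>2 y"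
      using address_surj[OF \<rho>1 address_in_addresses[OF \<rho>2]] by blast
    then show "\<exists>x. y = k x" using k address_inj[OF \<rho>2] by metis
  qed
  moreover have "adj x y \<longleftrightarrow> adj (k x) (k y)" for x y
    unfolding adj_iff_address[OF \<rho>1, of x y] adj_iff_address[OF \<rho>2, of "k x" "k y"] k ..
  ultimately have "k \<in> aut adj" unfolding aut_def bij_def by simp
  moreover have "k rt = rt" using k[of rt] by simp
  moreover have "k \<circ> \<rho>1 = \<rho>2"
  proof
    fix i
    show "(k \<circ> \<rho>1) i = \<rho>2 i"
      using k[of "\<rho>1 i"] address_ray[OF \<rho>1] address_ray[OF \<rho>2] address_inj[OF \<rho>2] by simp
  qed
  ultimately show ?thesis by blast
qed

lemma stabiliser_transitive_boundary:
  assumes w1: "\<omega>1 \<in> boundary adj" and w2: "\<omega>2 \<in> boundary adj"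
  shows "\<exists>k\<in>aut adj. k rt = rt \<and> bact k \<omega>1 = \<omega>2"
proof -
  obtain k where k: "k \<in> aut adj" "k rt = rt" "k \<circ> ray_to rt \<omega>1 = ray_to rt \<omega>2"
    using stabiliser_maps_ray ray_to_is_ray ray_to_in_end(2) w1 w2 by metis
  have "bact k \<omega>1 = end_of (k \<circ> ray_to rt \<omega>1)"
    using boundary_memD(2)[OF w1 ray_to_in_end(1)[OF w1, of rt]] bact_end_of[OF k(1)] by metis
  also have "\<dots> = \<omega>2"
    unfolding k(3) by (rule boundary_memD(2)[OF w2 ray_to_in_end(1)[OF w2], symmetric])
  finally show ?thesis using k by blast
qed

end

section \<open>The Iwasawa component\<close>

locale iwasawa_setting = rooted_regular_tree adj q o' for adj :: "'v \<Rightarrow> 'v \<Rightarrow> bool" and q o' +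
  fixes \<omega>m \<omega>p :: "(nat \<Rightarrow> 'v) set" and t r :: "'v \<Rightarrow> 'v" and l :: "int \<Rightarrow> 'v" and c :: int
  assumes \<omega>m: "\<omega>m \<in> boundary adj" and \<omega>p: "\<omega>p \<in> boundary adj"
    and line: "is_line adj \<omega>m \<omega>p l" and o_on_line: "o' = l c"
    and t_aut: "t \<in> aut adj" and t_fix: "bact t \<omega>m = \<omega>m" "bact t \<omega>p = \<omega>p"
    and t_translates: "\<And>k. t (l k) = l (k + 1)"
    and r_stab: "r \<in> stabK adj o'" and r_involution: "r \<circ> r = id"
    and r_conj: "\<And>j. r \<circ> tpow t j \<circ> inv r = tpow t (- j)"
begin

lemma busemann_plus_line: "busemann \<omega>p (l a) (l b) = b - a"
  by (rule busemann_line[OF line \<omega>p])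

lemma busemann_minus_line: "busemann \<omega>m (l a) (l b) = a - b"
  using busemann_line[OF is_line_reverse[OF line] \<omega>m, of "- a" "- b"] by simp

lemma inv_t_line: "inv t (l k) = l (k - 1)"
  using t_translates[of "k - 1"] aut_bij[OF t_aut] by (metis bij_is_inj diff_add_cancel inv_f_eq)

lemma tpow_line: "tpow t j (l k) = l (k + j)"
proof -
  have "(t ^^ m) (l k) = l (k + int m)" for m
    by (induction m) (simp_all add: t_translates ac_simps)
  moreover have "(inv t ^^ m) (l k) = l (k - int m)" for m
    by (induction m) (simp_all add: inv_t_line algebra_simps)
  ultimately show ?thesis unfolding tpow_def by simp
qed

lemma busemann_tpow: "busemann \<omega>p o' (tpow t j o') = j" "busemann \<omega>m o' (tpow t j o') = - j"
  unfolding o_on_line tpow_line busemann_plus_line busemann_minus_line by simp_all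

lemma r_aut: "r \<in> aut adj" and r_o: "r o' = o'"
  using r_stab unfolding stabK_def by auto

lemma r_swaps_ends: "bact r \<omega>p = \<omega>m"
proof -
  have rr: "r (r x) = x" for x using r_involution by (metis comp_apply id_apply)
  then have "inv r = r" by (metis inv_equality)
  then have "r \<circ> t \<circ> r = inv t" using r_conj[of 1] by (simp add: tpow_def)
  then have rtr: "r (t (r x)) = inv t x" for x by (metis comp_apply)
  have "r (l (c + int i)) = l (c - int i)" for i
  proof (induction i)
    case 0
    then show ?case using r_o o_on_line by simp
  next
    case (Suc i)
    have "r (l (c + int (Suc i))) = r (t (r (r (l (c + int i)))))"
      unfolding rr t_translates by (simp add: algebra_simps)
    also have "\<dots> = l (c - int (Suc i))" unfolding rtr Suc inv_t_line by (simp add: algebra_simps)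
    finally show ?case .
  qed
  then have "r \<circ> (\<lambda>i. l (c + int i)) = (\<lambda>i. (\<lambda>k. l (- k)) (- c + int i))" by auto
  moreover have "\<omega>p = end_of (\<lambda>i. l (c + int i))"
    using boundary_memD(2)[OF \<omega>p line_ray_in_end[OF line \<omega>p]] .
  moreover have "\<omega>m = end_of (\<lambda>i. (\<lambda>k. l (- k)) (- c + int i))"
    using boundary_memD(2)[OF \<omega>m line_ray_in_end[OF is_line_reverse[OF line] \<omega>m]] .
  ultimately show ?thesis using bact_end_of[OF r_aut] by metis
qed

lemma height_iwasawa:
  assumes "k \<in> stabK adj o'" "n \<in> Bplus adj \<omega>p"
  shows "height o' \<omega>p (k \<circ> n \<circ> tpow t j) = j"
proof -
  have k: "k \<in> aut adj" "k o' = o'" using assms(1) unfolding stabK_def by auto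
  have n: "n \<in> aut adj" "bact n \<omega>p = \<omega>p" "\<exists>v. n v = v" using assms(2) unfolding Bplus_def by auto
  have tj: "tpow t j \<in> aut adj" "bact (tpow t j) \<omega>p = \<omega>p"
    using aut_tpow[OF t_aut] bact_tpow[OF t_aut t_fix(2)] by auto
  have "height o' \<omega>p (k \<circ> n \<circ> tpow t j) = height o' \<omega>p (n \<circ> tpow t j)"
    unfolding comp_assoc by (rule height_comp_fix_base[OF k(1) aut_comp[OF n(1) tj(1)] \<omega>p k(2)])
  also have "\<dots> = height o' \<omega>p n + j"
    using height_comp_stab[OF n(1) tj(1) \<omega>p tj(2)] busemann_tpow(1) by simp
  also have "height o' \<omega>p n = 0" using height_eq_0_iff_fixes_vertex[OF n(1) \<omega>p n(2)] n(3) by simp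
  finally show ?thesis by linarith
qed

lemma iwasawa_decomposition:
  assumes g: "g \<in> aut adj"
  shows "\<exists>k\<in>stabK adj o'. \<exists>n\<in>Bplus adj \<omega>p. g = k \<circ> n \<circ> tpow t (height o' \<omega>p g)"
proof -
  define j where "j = height o' \<omega>p g"
  obtain k where k: "k \<in> aut adj" "k o' = o'" "bact k \<omega>p = bact g \<omega>p"
    using stabiliser_transitive_boundary[OF \<omega>p bact_boundary[OF g \<omega>p]] by blast
  have ik: "inv k \<in> aut adj" "inv k o' = o'"
    using aut_inv[OF k(1)] k(2) aut_bij[OF k(1)] by (metis bij_inv_eq_iff)+
  have gt: "g \<circ> tpow t (- j) \<in> aut adj" by (rule aut_comp[OF g aut_tpow[OF t_aut]])
  define n where "n = inv k \<circ> (g \<circ> tpow t (- j))"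
  have n_aut: "n \<in> aut adj" unfolding n_def by (rule aut_comp[OF ik(1) gt])
  have n_stab: "bact n \<omega>p = \<omega>p"
    unfolding n_def bact_comp bact_tpow[OF t_aut t_fix(2)] k(3)[symmetric]
    using bact_comp[of "inv k" k \<omega>p] aut_inv_comp[OF k(1)] by simp
  have "height o' \<omega>p n = height o' \<omega>p (g \<circ> tpow t (- j))"
    unfolding n_def by (rule height_comp_fix_base[OF ik(1) gt \<omega>p ik(2)])
  also have "\<dots> = 0"
    using height_comp_stab[OF g aut_tpow[OF t_aut] \<omega>p bact_tpow[OF t_aut t_fix(2)]] busemann_tpow(1)
    unfolding j_def by simp
  finally have "n \<in> Bplus adj \<omega>p"
    using height_eq_0_iff_fixes_vertex[OF n_aut \<omega>p n_stab] n_aut n_stab unfolding Bplus_def by blast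
  moreover have "k \<in> stabK adj o'" using k unfolding stabK_def by blast
  moreover have "k \<circ> n \<circ> tpow t j = g"
    unfolding n_def using aut_comp_inv[OF k(1)] tpow_neg_comp[OF aut_bij[OF t_aut]]
    by (simp add: comp_assoc flip: comp_assoc[of k])
  ultimately show ?thesis unfolding j_def by metis
qed

lemma Hc_eq_height: assumes g: "g \<in> aut adj" shows "Hc adj o' \<omega>p t g = height o' \<omega>p g"
  unfolding Hc_def
proof (rule the_equality)
  show "\<exists>k n. k \<in> stabK adj o' \<and> n \<in> Bplus adj \<omega>p \<and> g = k \<circ> n \<circ> tpow t (height o' \<omega>p g)"
    using iwasawa_decomposition[OF g] by blast
  fix j assume "\<exists>k n. k \<in> stabK adj o' \<and> n \<in> Bplus adj \<omega>p \<and> g = k \<circ> n \<circ> tpow t j"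
  then obtain k n where "k \<in> stabK adj o'" "n \<in> Bplus adj \<omega>p" "g = k \<circ> n \<circ> tpow t j" by blast
  then show "j = height o' \<omega>p g" using height_iwasawa by simp
qed

lemma Hc_comp_r: assumes g: "g \<in> aut adj" shows "Hc adj o' \<omega>p t (g \<circ> r) = height o' \<omega>m g"
proof -
  have "Hc adj o' \<omega>p t (g \<circ> r) = height o' \<omega>p (g \<circ> r)"
    by (rule Hc_eq_height[OF aut_comp[OF g r_aut]])
  also have "\<dots> = height o' \<omega>m g" unfolding height_def bact_comp r_swaps_ends by (simp add: r_o)
  finally show ?thesis .
qed

lemma Hc_comp_left:
  assumes g: "g \<in> aut adj" and g': "g' \<in> aut adj"
  shows "Hc adj o' \<omega>p t (g' \<circ> g) =
      pairing adj o' (g' o') (bact (g' \<circ> g) \<omega>p) + Hc adj o' \<omega>p t g"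
    and "Hc adj o' \<omega>p t (g' \<circ> g \<circ> r) =
      pairing adj o' (g' o') (bact (g' \<circ> g) \<omega>m) + Hc adj o' \<omega>p t (g \<circ> r)"
  unfolding Hc_eq_height[OF aut_comp[OF g' g]] Hc_eq_height[OF g]
    Hc_comp_r[OF aut_comp[OF g' g]] Hc_comp_r[OF g]
  by (rule height_comp[OF g g' \<omega>p], rule height_comp[OF g g' \<omega>m])

lemma Hc_comp_tpow:
  assumes g: "g \<in> aut adj"
  shows "Hc adj o' \<omega>p t (g \<circ> tpow t n) = Hc adj o' \<omega>p t g + n"
    and "Hc adj o' \<omega>p t (g \<circ> tpow t n \<circ> r) = Hc adj o' \<omega>p t (g \<circ> r) - n"
proof -
  have gt: "g \<circ> tpow t n \<in> aut adj" by (rule aut_comp[OF g aut_tpow[OF t_aut]])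
  show "Hc adj o' \<omega>p t (g \<circ> tpow t n) = Hc adj o' \<omega>p t g + n"
    using height_comp_stab[OF g aut_tpow[OF t_aut] \<omega>p bact_tpow[OF t_aut t_fix(2)], of o' n]
    unfolding Hc_eq_height[OF gt] Hc_eq_height[OF g] busemann_tpow(1) .
  show "Hc adj o' \<omega>p t (g \<circ> tpow t n \<circ> r) = Hc adj o' \<omega>p t (g \<circ> r) - n"
    using height_comp_stab[OF g aut_tpow[OF t_aut] \<omega>m bact_tpow[OF t_aut t_fix(1)], of o' n]
    unfolding Hc_comp_r[OF gt] Hc_comp_r[OF g] busemann_tpow(2) by simp
qed

end

lemma powr_mult_of_int_add:
  "(x :: complex) powr (a * of_int (u + v)) = x powr (a * of_int u) * x powr (a * of_int v)"
  by (simp add: distrib_left powr_add)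

theorem lemma3p2:
  fixes adj :: "'v \<Rightarrow> 'v \<Rightarrow> bool" and q :: nat and o' :: 'v
    and \<omega>m \<omega>p :: "(nat \<Rightarrow> 'v) set" and t r g g' :: "'v \<Rightarrow> 'v"
    and s s' :: complex and n :: int
  assumes q: "q \<ge> 2"
    and tree: "is_tree adj" and reg: "regular adj (q + 1)"
    and bdry: "\<omega>m \<in> boundary adj" "\<omega>p \<in> boundary adj" "\<omega>m \<noteq> \<omega>p"
    and o_on: "\<exists>l. is_line adj \<omega>m \<omega>p l \<and> o' \<in> range l"
    and t_aut: "t \<in> aut adj"
    and t_fix: "bact t \<omega>m = \<omega>m" "bact t \<omega>p = \<omega>p"
    and t_transl: "\<forall>l. is_line adj \<omega>m \<omega>p l \<longrightarrow> (\<forall>k. t (l k) = l (k + 1))"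
    and r_K: "r \<in> stabK adj o'" and r_inv: "r \<circ> r = id"
    and r_conj: "\<forall>j. r \<circ> tpow t j \<circ> inv r = tpow t (- j)"
    and g: "g \<in> aut adj" and g': "g' \<in> aut adj"
  shows "(dfun adj q o' \<omega>p t r s s' (g' \<circ> g) =
           (complex_of_nat q) powr ((1/2 + \<i> * s) * of_int (pairing adj o' (g' o') (bact (g' \<circ> g) \<omega>p))) *
           (complex_of_nat q) powr ((1/2 + \<i> * s') * of_int (pairing adj o' (g' o') (bact (g' \<circ> g) \<omega>m))) *
           dfun adj q o' \<omega>p t r s s' g) \<and>
         (dfun adj q o' \<omega>p t r s s' (g \<circ> tpow t n) =
           (complex_of_nat q) powr (of_int n * (1/2 + \<i> * s)) *
           (complex_of_nat q) powr (- of_int n * (1/2 + \<i> * s')) *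
           dfun adj q o' \<omega>p t r s s' g)"
proof -
  obtain l c where l: "is_line adj \<omega>m \<omega>p l" and c: "o' = l c" using o_on by blast
  interpret iwasawa_setting adj q o' \<omega>m \<omega>p t r l c
  proof (unfold_locales)
    show "t (l k) = l (k + 1)" for k using t_transl l by blast
  qed (use tree reg bdry l c t_aut t_fix r_K r_inv r_conj in auto)
  show ?thesis
    unfolding dfun_def Hc_comp_left[OF g g'] Hc_comp_tpow[OF g] diff_conv_add_uminus
      powr_mult_of_int_add
    by (simp add: mult_ac)
qed

end
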